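(* Let $p$ be a prime and $n \in \mathbb{N}$. Let $v \in \mathbb{Z}_p^n$ with $\rho(v) \ge 4/p$ and $|v| \ge 2^{18} \log p$, and let $Y \subset [n]$ be such that $|v_Y| \ge |v|/4$. Then $$\rho(v_Y) \le \frac{2^{13}\, |T_\ell(v_Y)|}{p \sqrt{|v|}},$$ where $\ell := 2^{-16} |v|$.
   Context: $\log$ is the natural logarithm. For $w \in \mathbb{Z}_p^m$: $|w|$ is the number of nonzero coordinates of $w$; $\rho(w) := \max_{a \in \mathbb{Z}_p} \Pr\big( \sum_{i=1}^m u_i w_i = a \big)$ with $u$ uniform on $\{-1,1\}^m$; and for $t\ge 0$ $$T_t(w) := \Big\{ k \in \mathbb{Z}_p : \sum_{i=1}^m \Big\| \frac{k \cdot w_i}{p} \Big\|^2 \le t \Big\},$$ where $k \cdot w_i \in \mathbb{Z}$ is the product of the representatives of $k$ and $w_i$ in $\{0,\ldots,p-1\}$, and $\|x\|$ is the distance from $x$ to the nearest integer. For $Y \subset [n]$, $v_Y \in \mathbb{Z}_p^{|Y|}$ is the restriction of $v$ to the coordinates in $Y$. *)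

theory Defs
  imports Complex_Main "HOL-Library.FuncSet" "HOL-Computational_Algebra.Primes"
begin

text \<open>Vectors over Z_p are represented as functions w :: nat => int on a finite index
set I; coordinates are read modulo p (representative w i mod p in {0..p-1}).\<close>

definition supp_size :: "nat \<Rightarrow> nat set \<Rightarrow> (nat \<Rightarrow> int) \<Rightarrow> nat" where
  "supp_size p I w = card {i \<in> I. w i mod int p \<noteq> 0}"

definition rho :: "nat \<Rightarrow> nat set \<Rightarrow> (nat \<Rightarrow> int) \<Rightarrow> real" where
  "rho p I w = Max ((\<lambda>a. real (card {u \<in> PiE I (\<lambda>_. {-1, 1::int}).
                         (\<Sum>i\<in>I. u i * w i) mod int p = a}) / 2 ^ card I) ` {0..<int p})"

definition dnear :: "real \<Rightarrow> real" where
  "dnear x = min (x - of_int \<lfloor>x\<rfloor>) (of_int \<lceil>x\<rceil> - x)"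

definition Tset :: "nat \<Rightarrow> real \<Rightarrow> nat set \<Rightarrow> (nat \<Rightarrow> int) \<Rightarrow> int set" where
  "Tset p t I w = {k \<in> {0..<int p}.
     (\<Sum>i\<in>I. (dnear (real_of_int (k * (w i mod int p)) / real p))\<^sup>2) \<le> t}"

end

theory Submission
  imports Defs "HOL-Analysis.L2_Norm" "HOL-Analysis.Complex_Transcendental"
begin

(* Write f(k) = sum_i ||k w_i / p||^2, so that T_t(w) = {k. f(k) <= t}.
   Fourier inversion and |cos(pi x)| <= exp(-2 ||x||^2), after the substitution k -> 2k
   (a bijection of Z_p since p is odd), give rho(w) <= p^-1 sum_k exp(-2 f(k)).
   Since sqrt f is subadditive, T_s + T_t is contained in T_((sqrt s + sqrt t)^2), and
   Cauchy-Davenport yields |T_(r^2 s)| >= min(p, r (|T_s| - 1) + 1); as long as |T_l| < p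
   this gives |T_s| <= 1 + 2 |T_l| sqrt(s/l) for s <= l.  Summing exp(-2 f) over the layers
   j <= f < j + 1 then bounds p rho(w) by 3 + 4 |T_l| / sqrt l, the tail over f > l being
   at most p exp(-2l) <= 1 because |v| >= 2^18 log p.  For w = v the hypothesis
   rho(v) >= 4/p forces 4 |T_l(v)| >= sqrt l, and T_l(v) is contained in T_l(v_Y); for
   w = v_Y, where |T_l(v_Y)| < p because sum_k f(k) >= p |v_Y| / 32, the bound becomes
   rho(v_Y) <= 16 |T_l(v_Y)| / (p sqrt l) = 2^12 |T_l(v_Y)| / (p sqrt |v|). *)

section \<open>Distance to the nearest integer\<close>

lemma dnear_attained: "\<exists>n::int. dnear x = \<bar>x - of_int n\<bar>"
proof (cases "x - of_int \<lfloor>x\<rfloor> \<le> of_int \<lceil>x\<rceil> - x")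
  case True
  then have "dnear x = \<bar>x - of_int \<lfloor>x\<rfloor>\<bar>" unfolding dnear_def by linarith
  then show ?thesis by blast
next
  case False
  then have "dnear x = \<bar>x - of_int \<lceil>x\<rceil>\<bar>" unfolding dnear_def by linarith
  then show ?thesis by blast
qed

lemma dnear_le: "dnear x \<le> \<bar>x - of_int n\<bar>"
proof (cases "n \<le> \<lfloor>x\<rfloor>")
  case True
  then have "real_of_int n \<le> of_int \<lfloor>x\<rfloor>" by simp
  then show ?thesis unfolding dnear_def using of_int_floor_le[of x] by linarith
next
  case False
  then have "real_of_int n \<ge> of_int \<lceil>x\<rceil>"
    using ceiling_diff_floor_le_1[of x] by (simp add: int_le_real_less)
  then show ?thesis unfolding dnear_def using le_of_int_ceiling[of x] by linarith
qed

lemma dnear_nonneg: "0 \<le> dnear x"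
  using dnear_attained[of x] by auto

lemma dnear_le_half: "dnear x \<le> 1/2"
proof -
  have "real_of_int \<lceil>x\<rceil> \<le> of_int \<lfloor>x\<rfloor> + 1"
    using ceiling_diff_floor_le_1[of x] by linarith
  then show ?thesis unfolding dnear_def by linarith
qed

lemma dnear_add_of_int: "dnear (x + of_int n) = dnear x"
  unfolding dnear_def by simp

lemma dnear_add_le: "dnear (x + y) \<le> dnear x + dnear y"
proof -
  obtain a b where "dnear x = \<bar>x - of_int a\<bar>" "dnear y = \<bar>y - of_int b\<bar>"
    using dnear_attained by metis
  moreover have "dnear (x + y) \<le> \<bar>x + y - of_int (a + b)\<bar>" by (rule dnear_le)
  ultimately show ?thesis by simp
qed

lemma dnear_divide_cong:
  assumes "p > 0" "a mod int p = b mod int p"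
  shows "dnear (real_of_int a / real p) = dnear (real_of_int b / real p)"
proof -
  obtain q where "a = b + int p * q"
    using assms(2) by (metis mod_eq_dvd_iff dvdE diff_add_cancel add.commute)
  then have "real_of_int a / real p = real_of_int b / real p + of_int q"
    using assms(1) by (simp add: field_simps)
  then show ?thesis by (simp add: dnear_add_of_int)
qed

lemma abs_cos_pi_diff_int: "\<bar>cos (pi * (y - of_int n))\<bar> = \<bar>cos (pi * y)\<bar>"
  by (simp add: right_diff_distrib cos_diff abs_if)

lemma abs_sin_pi_diff_int: "\<bar>sin (pi * (y - of_int n))\<bar> = \<bar>sin (pi * y)\<bar>"
  by (simp add: right_diff_distrib sin_diff abs_if)

lemma cos_le_one_minus_sq_div_3:
  fixes x :: real
  assumes "0 \<le> x" "x \<le> 2"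
  shows "cos x \<le> 1 - x\<^sup>2 / 3"
proof (cases "x = 0")
  case False
  then obtain t where t: "cos x = (\<Sum>m<4. cos_coeff m * x ^ m) + cos (t + 1/2 * real 4 * pi) / fact 4 * x ^ 4"
    using Maclaurin_cos_expansion2[of x 4] assms by auto
  have "(\<Sum>m<4. cos_coeff m * x ^ m) = 1 - x\<^sup>2 / 2"
    by (simp add: lessThan_nat_numeral cos_coeff_def fact_numeral)
  moreover have "cos (t + 1/2 * real 4 * pi) * x ^ 4 \<le> 1 * x ^ 4"
    by (rule mult_right_mono) simp_all
  then have "cos (t + 1/2 * real 4 * pi) / fact 4 * x ^ 4 \<le> x ^ 4 / 24"
    by (simp add: fact_numeral)
  moreover have "x ^ 4 \<le> 4 * x\<^sup>2"
  proof -
    have "x\<^sup>2 \<le> 4" using power_mono[of x 2 2] assms by simp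
    then have "x\<^sup>2 * x\<^sup>2 \<le> 4 * x\<^sup>2" by (intro mult_right_mono) auto
    then show ?thesis by (simp add: power4_eq_xxxx power2_eq_square mult.assoc)
  qed
  ultimately show ?thesis using t by linarith
qed simp

lemma abs_cos_pi_le_exp_dnear: "\<bar>cos (pi * y)\<bar> \<le> exp (- 2 * (dnear y)\<^sup>2)"
proof -
  obtain n where n: "dnear y = \<bar>y - of_int n\<bar>" using dnear_attained by metis
  define t where "t = dnear y"
  have t: "0 \<le> t" "t \<le> 1/2" unfolding t_def using dnear_nonneg dnear_le_half by auto
  have pi_t: "0 \<le> pi * t" "pi * t \<le> pi / 2"
    using t mult_left_mono[of t "1/2" pi] by auto
  have "cos (pi * t) = cos (pi * (y - of_int n))"
    unfolding t_def n by (metis abs_if cos_minus mult_minus_right)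
  then have "\<bar>cos (pi * y)\<bar> = \<bar>cos (pi * t)\<bar>"
    using abs_cos_pi_diff_int[of y n] by simp
  also have "\<bar>cos (pi * t)\<bar> = cos (pi * t)"
    using pi_t pi_gt_zero by (intro abs_of_nonneg cos_ge_zero) linarith+
  also have "\<dots> \<le> 1 - (pi * t)\<^sup>2 / 3"
    using pi_t pi_less_4 by (intro cos_le_one_minus_sq_div_3) linarith+
  also have "\<dots> \<le> 1 - 2 * t\<^sup>2"
  proof -
    have "6 \<le> pi\<^sup>2" using pi_gt3 power_mono[of 3 pi 2] by simp
    then have "6 * t\<^sup>2 \<le> pi\<^sup>2 * t\<^sup>2" by (intro mult_right_mono) auto
    then show ?thesis by (simp add: power_mult_distrib)
  qed
  also have "\<dots> \<le> exp (- 2 * t\<^sup>2)" using exp_ge_add_one_self[of "- 2 * t\<^sup>2"] by simp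
  finally show ?thesis unfolding t_def .
qed

lemma one_minus_cos_le_dnear: "1 - cos (2 * pi * y) \<le> 32 * (dnear y)\<^sup>2"
proof -
  obtain n where n: "dnear y = \<bar>y - of_int n\<bar>" using dnear_attained by metis
  have "\<bar>sin (pi * y)\<bar> \<le> \<bar>pi * (y - of_int n)\<bar>"
    using abs_sin_pi_diff_int[of y n] abs_sin_x_le_abs_x[of "pi * (y - of_int n)"] by simp
  also have "\<dots> \<le> 4 * dnear y"
    using n pi_less_4 dnear_nonneg[of y] by (simp add: abs_mult mult_right_mono)
  finally have "(sin (pi * y))\<^sup>2 \<le> (4 * dnear y)\<^sup>2"
    using power_mono[of "\<bar>sin (pi * y)\<bar>"] by (metis abs_ge_zero power2_abs)
  moreover have "1 - cos (2 * pi * y) = 2 * (sin (pi * y))\<^sup>2"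
    using cos_double_sin[of "pi * y"] by (simp add: mult.assoc)
  ultimately show ?thesis by (simp add: power_mult_distrib)
qed

section \<open>A Fourier bound for the concentration probability\<close>

lemma sum_cis_roots_of_unity:
  fixes d :: int
  assumes "p > 0"
  shows "(\<Sum>k\<in>{0..<int p}. cis (2 * pi * real_of_int k * real_of_int d / real p))
         = (if int p dvd d then of_nat p else 0)"
proof -
  define z where "z = cis (2 * pi * real_of_int d / real p)"
  have "(\<Sum>k\<in>{0..<int p}. cis (2 * pi * real_of_int k * real_of_int d / real p))
        = (\<Sum>k<p. cis (real k * (2 * pi * real_of_int d / real p)))"
    by (simp add: image_atLeastZeroLessThan_int sum.reindex mult_ac)
  also have "\<dots> = (\<Sum>k<p. z ^ k)"
    by (intro sum.cong refl) (simp only: z_def Complex.DeMoivre)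
  finally have sum_z: "(\<Sum>k\<in>{0..<int p}. cis (2 * pi * real_of_int k * real_of_int d / real p)) = (\<Sum>k<p. z ^ k)" .
  have z_iff: "z = 1 \<longleftrightarrow> int p dvd d"
  proof
    assume "z = 1"
    then have "cos (2 * pi * real_of_int d / real p) = 1"
      unfolding z_def by (metis cis.sel(1) one_complex.sel(1))
    then obtain n :: int where "2 * pi * real_of_int d / real p = of_int n * 2 * pi"
      using cos_one_2pi_int by blast
    then have "real_of_int d = of_int (n * int p)"
      using assms by (simp add: field_simps)
    then show "int p dvd d" by (simp only: of_int_eq_iff) simp
  next
    assume "int p dvd d"
    then obtain q where "d = int p * q" by (elim dvdE)
    then have "2 * pi * real_of_int d / real p = 2 * pi * real_of_int q"
      using assms by simp
    then show "z = 1" unfolding z_def by simp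
  qed
  have "z ^ p = cis (2 * pi * real_of_int d)"
    unfolding z_def Complex.DeMoivre using assms by simp
  then have "z ^ p = 1" by simp
  then show ?thesis
    unfolding sum_z using z_iff by (simp add: sum_gp_strict)
qed

lemma cis_sum: "cis (sum f A) = (\<Prod>x\<in>A. cis (f x))"
  by (induction A rule: infinite_finite_induct) (auto simp: cis_mult[symmetric])

lemma sum_signs_cis:
  assumes "finite I"
  shows "(\<Sum>u\<in>PiE I (\<lambda>_. {-1, 1::int}). cis (\<Sum>i\<in>I. real_of_int (u i) * \<theta> i))
         = (\<Prod>i\<in>I. complex_of_real (2 * cos (\<theta> i)))"
proof -
  have "(\<Sum>u\<in>PiE I (\<lambda>_. {-1, 1::int}). cis (\<Sum>i\<in>I. real_of_int (u i) * \<theta> i))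
        = (\<Sum>u\<in>PiE I (\<lambda>_. {-1, 1::int}). \<Prod>i\<in>I. cis (real_of_int (u i) * \<theta> i))"
    by (simp only: cis_sum)
  also have "\<dots> = (\<Prod>i\<in>I. \<Sum>s\<in>{-1, 1::int}. cis (real_of_int s * \<theta> i))"
    using assms by (intro prod_sum_PiE[symmetric]) auto
  also have "\<dots> = (\<Prod>i\<in>I. complex_of_real (2 * cos (\<theta> i)))"
    by (intro prod.cong refl) (simp add: complex_eq_iff)
  finally show ?thesis .
qed

lemma card_mod_eq_Fourier:
  assumes "p > 0" "finite U" "a \<in> {0..<int p}"
  shows "complex_of_nat (card {u \<in> U. S u mod int p = a})
         = (\<Sum>k\<in>{0..<int p}. cis (- 2 * pi * real_of_int k * real_of_int a / real p)
              * (\<Sum>u\<in>U. cis (2 * pi * real_of_int k * real_of_int (S u) / real p))) / of_nat p"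
proof -
  have indicator: "(if S u mod int p = a then 1 else 0)
      = (\<Sum>k\<in>{0..<int p}. cis (2 * pi * real_of_int k * real_of_int (S u - a) / real p)) / of_nat p" for u
  proof -
    have "S u mod int p = a \<longleftrightarrow> int p dvd S u - a"
      using assms(3) by (simp add: mod_eq_dvd_iff[symmetric])
    then show ?thesis
      using sum_cis_roots_of_unity[OF assms(1), of "S u - a"] assms(1) by simp
  qed
  have "complex_of_nat (card {u \<in> U. S u mod int p = a}) = (\<Sum>u\<in>U. if S u mod int p = a then 1 else 0)"
    using assms(2) by (simp add: sum.inter_filter[symmetric])
  also have "\<dots> = (\<Sum>u\<in>U. \<Sum>k\<in>{0..<int p}. cis (2 * pi * real_of_int k * real_of_int (S u - a) / real p)) / of_nat p"
    unfolding indicator by (simp add: sum_divide_distrib)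
  also have "\<dots> = (\<Sum>k\<in>{0..<int p}. \<Sum>u\<in>U. cis (- 2 * pi * real_of_int k * real_of_int a / real p)
              * cis (2 * pi * real_of_int k * real_of_int (S u) / real p)) / of_nat p"
    by (simp add: sum.swap[of _ U] cis_mult diff_divide_distrib algebra_simps)
  finally show ?thesis by (simp add: sum_distrib_left)
qed

lemma card_signs_sum_mod_le:
  assumes "p > 0" "finite I" "a \<in> {0..<int p}"
  shows "real (card {u \<in> PiE I (\<lambda>_. {-1, 1::int}). (\<Sum>i\<in>I. u i * v i) mod int p = a})
         \<le> 2 ^ card I / real p * (\<Sum>k\<in>{0..<int p}. \<Prod>i\<in>I.
              \<bar>cos (2 * pi * real_of_int k * real_of_int (v i) / real p)\<bar>)"
proof -
  define U where "U = PiE I (\<lambda>_. {-1, 1::int})"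
  define \<theta> where "\<theta> k i = 2 * pi * real_of_int k * real_of_int (v i) / real p" for k i
  have "finite U" unfolding U_def using assms(2) by (simp add: finite_PiE)
  have signs: "(\<Sum>u\<in>U. cis (2 * pi * real_of_int k * real_of_int (\<Sum>i\<in>I. u i * v i) / real p))
        = (\<Prod>i\<in>I. complex_of_real (2 * cos (\<theta> k i)))" for k
  proof -
    have "2 * pi * real_of_int k * real_of_int (\<Sum>i\<in>I. u i * v i) / real p
          = (\<Sum>i\<in>I. real_of_int (u i) * \<theta> k i)" for u
      unfolding \<theta>_def by (simp add: sum_distrib_left sum_divide_distrib algebra_simps)
    then show ?thesis
      unfolding U_def by (simp add: sum_signs_cis[OF assms(2)])
  qed
  let ?N = "card {u \<in> U. (\<Sum>i\<in>I. u i * v i) mod int p = a}"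
  have "real ?N = cmod (complex_of_nat ?N)" by simp
  also have "\<dots> = cmod (\<Sum>k\<in>{0..<int p}. cis (- 2 * pi * real_of_int k * real_of_int a / real p)
                     * (\<Prod>i\<in>I. complex_of_real (2 * cos (\<theta> k i)))) / real p"
    unfolding card_mod_eq_Fourier[OF assms(1) \<open>finite U\<close> assms(3)] signs by (simp add: norm_divide)
  also have "\<dots> \<le> (\<Sum>k\<in>{0..<int p}. cmod (cis (- 2 * pi * real_of_int k * real_of_int a / real p)
                     * (\<Prod>i\<in>I. complex_of_real (2 * cos (\<theta> k i))))) / real p"
    by (intro divide_right_mono norm_sum) simp
  also have "\<dots> = 2 ^ card I / real p * (\<Sum>k\<in>{0..<int p}. \<Prod>i\<in>I. \<bar>cos (\<theta> k i)\<bar>)"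
    by (simp add: norm_mult prod_norm[symmetric] abs_mult prod.distrib norm_power sum_distrib_left sum_divide_distrib)
  finally show ?thesis unfolding U_def \<theta>_def .
qed

lemma rho_le:
  assumes "p > 0"
    and "\<And>a. a \<in> {0..<int p} \<Longrightarrow>
           real (card {u \<in> PiE I (\<lambda>_. {-1, 1::int}). (\<Sum>i\<in>I. u i * v i) mod int p = a}) / 2 ^ card I \<le> c"
  shows "rho p I v \<le> c"
  unfolding rho_def using assms by (subst Max_le_iff) auto

lemma rho_le_one:
  assumes "p > 0" "finite I"
  shows "rho p I v \<le> 1"
proof (rule rho_le[OF assms(1)])
  fix a
  have "card {u \<in> PiE I (\<lambda>_. {-1, 1::int}). (\<Sum>i\<in>I. u i * v i) mod int p = a}
        \<le> card (PiE I (\<lambda>_. {-1, 1::int}))"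
    using assms(2) by (intro card_mono) (auto simp: finite_PiE)
  also have "\<dots> = 2 ^ card I"
    using assms(2) by (simp add: card_PiE numeral_2_eq_2)
  finally show "real (card {u \<in> PiE I (\<lambda>_. {-1, 1::int}). (\<Sum>i\<in>I. u i * v i) mod int p = a}) / 2 ^ card I \<le> 1"
    by (simp add: divide_le_eq_1)
qed

lemma sum_mult_mod_reindex:
  assumes "coprime c (int p)"
  shows "(\<Sum>k\<in>{0..<int p}. f ((c * k) mod int p)) = (\<Sum>k\<in>{0..<int p}. f k)"
proof -
  have inj: "inj_on (\<lambda>k. (c * k) mod int p) {0..<int p}"
  proof
    fix k k' assume "k \<in> {0..<int p}" "k' \<in> {0..<int p}" "(c * k) mod int p = (c * k') mod int p"
    moreover from this(3) have "int p dvd c * (k - k')"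
      by (simp add: mod_eq_dvd_iff right_diff_distrib)
    then have "int p dvd k - k'"
      using assms by (simp add: coprime_commute coprime_dvd_mult_right_iff)
    ultimately show "k = k'" by (simp add: mod_eq_dvd_iff[symmetric])
  qed
  have "(\<lambda>k. (c * k) mod int p) ` {0..<int p} = {0..<int p}"
    using inj by (intro endo_inj_surj) auto
  then show ?thesis
    using sum.reindex[OF inj, of f] by simp
qed

definition tnorm :: "nat \<Rightarrow> nat set \<Rightarrow> (nat \<Rightarrow> int) \<Rightarrow> int \<Rightarrow> real" where
  "tnorm p I v k = (\<Sum>i\<in>I. (dnear (real_of_int (k * (v i mod int p)) / real p))\<^sup>2)"

lemma Tset_eq_tnorm_le: "Tset p t I v = {k \<in> {0..<int p}. tnorm p I v k \<le> t}"
  unfolding Tset_def tnorm_def ..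

lemma tnorm_nonneg: "0 \<le> tnorm p I v k"
  unfolding tnorm_def by (simp add: sum_nonneg)

lemma tnorm_zero [simp]: "tnorm p I v 0 = 0"
  unfolding tnorm_def dnear_def by simp

lemma tnorm_mono_index: "finite I \<Longrightarrow> J \<subseteq> I \<Longrightarrow> tnorm p J v k \<le> tnorm p I v k"
  unfolding tnorm_def by (rule sum_mono2) auto

lemma tnorm_eq_sum_dnear:
  assumes "p > 0"
  shows "tnorm p I v k = (\<Sum>i\<in>I. (dnear (real_of_int (k * v i) / real p))\<^sup>2)"
proof -
  have "dnear (real_of_int (k * (v i mod int p)) / real p) = dnear (real_of_int (k * v i) / real p)" for i
    using assms by (intro dnear_divide_cong) (simp_all add: mod_mult_right_eq)
  then show ?thesis unfolding tnorm_def by simp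
qed

lemma tnorm_mod:
  assumes "p > 0"
  shows "tnorm p I v (k mod int p) = tnorm p I v k"
proof -
  have "dnear (real_of_int (k mod int p * v i) / real p) = dnear (real_of_int (k * v i) / real p)" for i
    using assms by (intro dnear_divide_cong) (simp_all add: mod_mult_left_eq)
  then show ?thesis unfolding tnorm_eq_sum_dnear[OF assms] by simp
qed

lemma prod_abs_cos_le_exp_tnorm:
  assumes "p > 0" "finite I"
  shows "(\<Prod>i\<in>I. \<bar>cos (2 * pi * real_of_int k * real_of_int (v i) / real p)\<bar>)
         \<le> exp (- 2 * tnorm p I v ((2 * k) mod int p))"
proof -
  have "\<bar>cos (2 * pi * real_of_int k * real_of_int (v i) / real p)\<bar>
        \<le> exp (- 2 * (dnear (real_of_int (2 * k * v i) / real p))\<^sup>2)" for i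
  proof -
    have "2 * pi * real_of_int k * real_of_int (v i) / real p = pi * (real_of_int (2 * k * v i) / real p)"
      by simp
    then show ?thesis by (metis abs_cos_pi_le_exp_dnear)
  qed
  then have "(\<Prod>i\<in>I. \<bar>cos (2 * pi * real_of_int k * real_of_int (v i) / real p)\<bar>)
        \<le> (\<Prod>i\<in>I. exp (- 2 * (dnear (real_of_int (2 * k * v i) / real p))\<^sup>2))"
    by (intro prod_mono) simp
  also have "\<dots> = exp (- 2 * tnorm p I v (2 * k))"
    using assms by (simp add: tnorm_eq_sum_dnear exp_sum sum_distrib_left)
  finally show ?thesis using tnorm_mod[OF assms(1)] by simp
qed

lemma rho_le_sum_exp_tnorm:
  assumes "p > 0" "odd p" "finite I"
  shows "rho p I v \<le> (\<Sum>k\<in>{0..<int p}. exp (- 2 * tnorm p I v k)) / real p"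
proof (rule rho_le[OF assms(1)])
  fix a assume "a \<in> {0..<int p}"
  then have "real (card {u \<in> PiE I (\<lambda>_. {-1, 1::int}). (\<Sum>i\<in>I. u i * v i) mod int p = a})
        \<le> 2 ^ card I / real p * (\<Sum>k\<in>{0..<int p}. \<Prod>i\<in>I.
              \<bar>cos (2 * pi * real_of_int k * real_of_int (v i) / real p)\<bar>)"
    by (rule card_signs_sum_mod_le[OF assms(1,3)])
  also have "\<dots> \<le> 2 ^ card I / real p * (\<Sum>k\<in>{0..<int p}. exp (- 2 * tnorm p I v ((2 * k) mod int p)))"
    by (intro mult_left_mono sum_mono prod_abs_cos_le_exp_tnorm[OF assms(1,3)]) simp
  also have "\<dots> = 2 ^ card I / real p * (\<Sum>k\<in>{0..<int p}. exp (- 2 * tnorm p I v k))"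
  proof -
    have "coprime 2 (int p)" using assms(2) by simp
    from sum_mult_mod_reindex[OF this, of "\<lambda>k. exp (- 2 * tnorm p I v k)"] show ?thesis by simp
  qed
  finally show "real (card {u \<in> PiE I (\<lambda>_. {-1, 1::int}). (\<Sum>i\<in>I. u i * v i) mod int p = a}) / 2 ^ card I
        \<le> (\<Sum>k\<in>{0..<int p}. exp (- 2 * tnorm p I v k)) / real p"
    by (simp add: field_simps)
qed

section \<open>The Cauchy--Davenport theorem\<close>

definition sumset :: "nat \<Rightarrow> int set \<Rightarrow> int set \<Rightarrow> int set" where
  "sumset p A B = (\<lambda>(a, b). (a + b) mod int p) ` (A \<times> B)"

lemma sumset_subset: "p > 0 \<Longrightarrow> sumset p A B \<subseteq> {0..<int p}"
  unfolding sumset_def by auto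

lemma finite_sumset: "p > 0 \<Longrightarrow> finite (sumset p A B)"
  using sumset_subset finite_atLeastLessThan_int by (rule finite_subset)

lemma inj_on_add_mod: "inj_on (\<lambda>y. (y + e) mod int p) {0..<int p}"
proof
  fix x y assume "x \<in> {0..<int p}" "y \<in> {0..<int p}" "(x + e) mod int p = (y + e) mod int p"
  moreover from this(3) have "x mod int p = y mod int p"
    by (simp add: mod_eq_dvd_iff)
  ultimately show "x = y" by simp
qed

lemma card_image_add_mod: "B \<subseteq> {0..<int p} \<Longrightarrow> card ((\<lambda>y. (y + e) mod int p) ` B) = card B"
  by (intro card_image inj_on_subset[OF inj_on_add_mod])

lemma card_le_card_sumset:
  assumes "p > 0" "A \<subseteq> {0..<int p}" "b \<in> B"
  shows "card A \<le> card (sumset p A B)"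
proof -
  have "(\<lambda>y. (y + b) mod int p) ` A \<subseteq> sumset p A B"
    unfolding sumset_def using assms(3) by force
  then have "card ((\<lambda>y. (y + b) mod int p) ` A) \<le> card (sumset p A B)"
    using finite_sumset[OF assms(1)] by (intro card_mono)
  then show ?thesis using card_image_add_mod[OF assms(2)] by simp
qed

lemma exists_shift_not_mem:
  assumes "prime p" "A \<subseteq> {0..<int p}" "A \<noteq> {}" "A \<noteq> {0..<int p}" "\<not> int p dvd d"
  obtains a where "a \<in> A" "(a + d) mod int p \<notin> A"
proof (rule ccontr)
  assume "\<not> thesis"
  with that have closed: "(x + d) mod int p \<in> A" if "x \<in> A" for x
    using \<open>x \<in> A\<close> by blast
  obtain a where "a \<in> A" using assms(3) by blast
  have orbit: "(a + int j * d) mod int p \<in> A" for j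
  proof (induction j)
    case 0
    then show ?case using assms(2) \<open>a \<in> A\<close> by auto
  next
    case (Suc j)
    then have "((a + int j * d) mod int p + d) mod int p \<in> A" by (rule closed)
    then show ?case unfolding mod_add_left_eq by (simp add: algebra_simps)
  qed
  have "inj_on (\<lambda>j. (a + int j * d) mod int p) {..<p}"
  proof
    fix i j assume "i \<in> {..<p}" "j \<in> {..<p}" "(a + int i * d) mod int p = (a + int j * d) mod int p"
    moreover from this(3) have "int p dvd (int i - int j) * d"
      by (simp add: mod_eq_dvd_iff algebra_simps)
    then have "int p dvd int i - int j"
      using assms(1,5) by (simp add: prime_dvd_mult_iff)
    ultimately show "i = j" by (simp add: mod_eq_dvd_iff[symmetric])
  qed
  then have "p \<le> card A"
    using orbit card_mono[of A "(\<lambda>j. (a + int j * d) mod int p) ` {..<p}"] assms(2)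
    by (auto simp: card_image intro: finite_subset)
  moreover have "card A \<le> p"
    using card_mono[OF _ assms(2)] by simp
  ultimately have "A = {0..<int p}"
    using assms(2) by (intro card_subset_eq) auto
  with assms(4) show False ..
qed

lemma sumset_davenport_subset:
  "sumset p (A \<union> (\<lambda>y. (y + e) mod int p) ` B) {y \<in> B. (y + e) mod int p \<in> A} \<subseteq> sumset p A B"
proof
  fix s assume "s \<in> sumset p (A \<union> (\<lambda>y. (y + e) mod int p) ` B) {y \<in> B. (y + e) mod int p \<in> A}"
  then obtain x y where x: "x \<in> A \<or> x \<in> (\<lambda>y. (y + e) mod int p) ` B" and y: "y \<in> B" "(y + e) mod int p \<in> A"
    and s: "s = (x + y) mod int p"
    unfolding sumset_def by auto
  from x show "s \<in> sumset p A B"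
  proof
    assume "x \<in> A"
    then show ?thesis unfolding sumset_def s using y by force
  next
    assume "x \<in> (\<lambda>y. (y + e) mod int p) ` B"
    then obtain z where "z \<in> B" "x = (z + e) mod int p" by blast
    then have "s = ((y + e) mod int p + z) mod int p"
      unfolding s by (simp add: mod_add_left_eq mod_add_right_eq algebra_simps)
    then show ?thesis unfolding sumset_def using y(2) \<open>z \<in> B\<close> by force
  qed
qed

lemma card_davenport_transform:
  assumes "A \<subseteq> {0..<int p}" "B \<subseteq> {0..<int p}"
  shows "card (A \<union> (\<lambda>y. (y + e) mod int p) ` B) + card {y \<in> B. (y + e) mod int p \<in> A} = card A + card B"
proof -
  let ?tr = "\<lambda>y. (y + e) mod int p"
  have inj: "inj_on ?tr B" using assms(2) by (rule inj_on_subset[OF inj_on_add_mod])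
  then have "card {y \<in> B. ?tr y \<in> A} = card (?tr ` {y \<in> B. ?tr y \<in> A})"
    by (intro card_image[symmetric] inj_on_subset[OF inj]) auto
  also have "?tr ` {y \<in> B. ?tr y \<in> A} = A \<inter> ?tr ` B" by auto
  finally have "card {y \<in> B. ?tr y \<in> A} = card (A \<inter> ?tr ` B)" .
  moreover have "card (?tr ` B) = card B" using inj by (rule card_image)
  moreover have "finite A" "finite B" using assms finite_subset by blast+
  ultimately show ?thesis using card_Un_Int[of A "?tr ` B"] by simp
qed

lemma davenport_transform:
  assumes "p > 0" "A \<subseteq> {0..<int p}" "B \<subseteq> {0..<int p}"
    and "a \<in> A" "b \<in> B" "b' \<in> B" "(a + b' - b) mod int p \<notin> A"
  obtains A' B' where "A' \<subseteq> {0..<int p}" "A' \<noteq> {}" "B' \<subseteq> B" "B' \<noteq> {}" "card B' < card B"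
    "card A' + card B' = card A + card B" "sumset p A' B' \<subseteq> sumset p A B"
proof
  let ?tr = "\<lambda>y. (y + (a - b)) mod int p"
  show "A \<union> ?tr ` B \<subseteq> {0..<int p}" "A \<union> ?tr ` B \<noteq> {}"
    using assms(1,2,4) by auto
  show "{y \<in> B. ?tr y \<in> A} \<subseteq> B" by blast
  show "{y \<in> B. ?tr y \<in> A} \<noteq> {}"
    using assms(2,4,5) by (auto intro!: exI[of _ b])
  have "b' \<notin> {y \<in> B. ?tr y \<in> A}" using assms(7) by (simp add: algebra_simps)
  then show "card {y \<in> B. ?tr y \<in> A} < card B"
    using assms(3,6) finite_subset by (intro psubset_card_mono) auto
  show "card (A \<union> ?tr ` B) + card {y \<in> B. ?tr y \<in> A} = card A + card B"
    using assms(2,3) by (rule card_davenport_transform)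
  show "sumset p (A \<union> ?tr ` B) {y \<in> B. ?tr y \<in> A} \<subseteq> sumset p A B"
    by (rule sumset_davenport_subset)
qed

theorem cauchy_davenport:
  assumes "prime p" "A \<subseteq> {0..<int p}" "B \<subseteq> {0..<int p}" "A \<noteq> {}" "B \<noteq> {}"
  shows "min p (card A + card B - 1) \<le> card (sumset p A B)"
  using assms(2-5)
proof (induction "card B" arbitrary: A B rule: less_induct)
  case less
  have "p > 0" using assms(1) prime_gt_0_nat by blast
  obtain b where "b \<in> B" using less.prems(4) by blast
  consider "card B = 1" | "A = {0..<int p}" | "card B \<noteq> 1" "A \<noteq> {0..<int p}" by blast
  then show ?case
  proof cases
    case 1
    then show ?thesis using card_le_card_sumset[OF \<open>p > 0\<close> less.prems(1) \<open>b \<in> B\<close>] by simp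
  next
    case 2
    then show ?thesis using card_le_card_sumset[OF \<open>p > 0\<close> less.prems(1) \<open>b \<in> B\<close>] by simp
  next
    case 3
    then have "B \<noteq> {b}" by auto
    then obtain b' where "b' \<in> B" "b' \<noteq> b" using \<open>b \<in> B\<close> by blast
    moreover have "b' mod int p = b'" "b mod int p = b"
      using \<open>b \<in> B\<close> \<open>b' \<in> B\<close> less.prems(2) by auto
    ultimately have "\<not> int p dvd b' - b"
      by (simp add: mod_eq_dvd_iff[symmetric])
    then obtain a where "a \<in> A" "(a + (b' - b)) mod int p \<notin> A"
      using exists_shift_not_mem[OF assms(1) less.prems(1,3) 3(2)] by blast
    then obtain A' B' where A': "A' \<subseteq> {0..<int p}" "A' \<noteq> {}" and B': "B' \<subseteq> B" "B' \<noteq> {}"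
      and "card B' < card B" "card A' + card B' = card A + card B" "sumset p A' B' \<subseteq> sumset p A B"
      using davenport_transform[OF \<open>p > 0\<close> less.prems(1,2) _ \<open>b \<in> B\<close> \<open>b' \<in> B\<close>] by (metis add_diff_eq)
    have "min p (card A' + card B' - 1) \<le> card (sumset p A' B')"
      using less.hyps[OF \<open>card B' < card B\<close> A'(1) _ A'(2) B'(2)] B'(1) less.prems(2) by blast
    moreover have "card (sumset p A' B') \<le> card (sumset p A B)"
      using \<open>sumset p A' B' \<subseteq> sumset p A B\<close> finite_sumset[OF \<open>p > 0\<close>] by (intro card_mono)
    ultimately show ?thesis using \<open>card A' + card B' = card A + card B\<close> by linarith
  qed
qed

section \<open>Growth of the sets T_t\<close>

lemma Tset_subset: "Tset p t I v \<subseteq> {0..<int p}"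
  unfolding Tset_def by auto

lemma finite_Tset: "finite (Tset p t I v)"
  using Tset_subset finite_atLeastLessThan_int by (rule finite_subset)

lemma zero_mem_Tset: "p > 0 \<Longrightarrow> 0 \<le> t \<Longrightarrow> 0 \<in> Tset p t I v"
  unfolding Tset_eq_tnorm_le by simp

lemma card_Tset_pos: "p > 0 \<Longrightarrow> 0 \<le> t \<Longrightarrow> 0 < card (Tset p t I v)"
  using zero_mem_Tset[of p t I v] finite_Tset[of p t I v] by (auto simp: card_gt_0_iff)

lemma Tset_mono: "s \<le> t \<Longrightarrow> Tset p s I v \<subseteq> Tset p t I v"
  unfolding Tset_eq_tnorm_le by auto

lemma Tset_antimono_index:
  assumes "finite I" "J \<subseteq> I"
  shows "Tset p t I v \<subseteq> Tset p t J v"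
proof
  fix k assume "k \<in> Tset p t I v"
  then show "k \<in> Tset p t J v"
    using tnorm_mono_index[OF assms, of p v k] unfolding Tset_eq_tnorm_le by simp
qed

lemma sqrt_tnorm_add_le:
  assumes "p > 0"
  shows "sqrt (tnorm p I v ((x + y) mod int p)) \<le> sqrt (tnorm p I v x) + sqrt (tnorm p I v y)"
proof -
  let ?d = "\<lambda>k i. dnear (real_of_int (k * v i) / real p)"
  have sqrt_tnorm: "sqrt (tnorm p I v k) = L2_set (?d k) I" for k
    unfolding tnorm_eq_sum_dnear[OF assms] L2_set_def ..
  have "L2_set (?d (x + y)) I \<le> L2_set (\<lambda>i. ?d x i + ?d y i) I"
    by (intro L2_set_mono) (simp_all add: distrib_right add_divide_distrib dnear_add_le dnear_nonneg)
  also have "\<dots> \<le> L2_set (?d x) I + L2_set (?d y) I"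
    by (rule L2_set_triangle_ineq)
  finally show ?thesis
    unfolding tnorm_mod[OF assms] sqrt_tnorm .
qed

lemma sumset_Tset_subset:
  assumes "p > 0" "0 \<le> s" "0 \<le> t"
  shows "sumset p (Tset p s I v) (Tset p t I v) \<subseteq> Tset p ((sqrt s + sqrt t)\<^sup>2) I v"
proof
  fix z assume "z \<in> sumset p (Tset p s I v) (Tset p t I v)"
  then obtain x y where "tnorm p I v x \<le> s" "tnorm p I v y \<le> t" and z: "z = (x + y) mod int p"
    unfolding sumset_def Tset_eq_tnorm_le by auto
  then have "sqrt (tnorm p I v x) + sqrt (tnorm p I v y) \<le> sqrt s + sqrt t"
    by (intro add_mono real_sqrt_le_mono)
  then have "tnorm p I v z \<le> (sqrt s + sqrt t)\<^sup>2"
    unfolding z using sqrt_tnorm_add_le[OF assms(1), of I v x y] by (intro sqrt_le_D) linarith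
  then show "z \<in> Tset p ((sqrt s + sqrt t)\<^sup>2) I v"
    unfolding Tset_eq_tnorm_le z using assms(1) by simp
qed

lemma card_Tset_iterate:
  assumes "prime p" "0 \<le> s" "1 \<le> r"
  shows "min p (r * (card (Tset p s I v) - 1) + 1) \<le> card (Tset p ((real r)\<^sup>2 * s) I v)"
  using assms(3)
proof (induction r rule: dec_induct)
  case base
  then show ?case using card_Tset_pos[of p s] assms(1,2) prime_gt_0_nat by fastforce
next
  case (step r)
  have "p > 0" using assms(1) prime_gt_0_nat by blast
  let ?A = "Tset p ((real r)\<^sup>2 * s) I v" and ?B = "Tset p s I v"
  have "0 \<in> ?A" "0 \<in> ?B"
    using zero_mem_Tset[OF \<open>p > 0\<close>] assms(2) by simp_all
  then have "min p (card ?A + card ?B - 1) \<le> card (sumset p ?A ?B)"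
    by (intro cauchy_davenport[OF assms(1) Tset_subset Tset_subset]) auto
  also have "\<dots> \<le> card (Tset p ((real (Suc r))\<^sup>2 * s) I v)"
  proof -
    have "sqrt ((real r)\<^sup>2 * s) + sqrt s = real (Suc r) * sqrt s"
      by (simp add: real_sqrt_mult distrib_right)
    then have "(sqrt ((real r)\<^sup>2 * s) + sqrt s)\<^sup>2 = (real (Suc r))\<^sup>2 * s"
      using assms(2) by (simp add: power_mult_distrib)
    then show ?thesis
      using sumset_Tset_subset[OF \<open>p > 0\<close>, of "(real r)\<^sup>2 * s" s I v] assms(2)
      by (intro card_mono finite_Tset) auto
  qed
  finally have "min p (card ?A + card ?B - 1) \<le> card (Tset p ((real (Suc r))\<^sup>2 * s) I v)" .
  moreover have "Suc r * (card ?B - 1) + 1 = r * (card ?B - 1) + 1 + (card ?B - 1)"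
    by simp
  ultimately show ?case
    using step.IH card_Tset_pos[OF \<open>p > 0\<close> assms(2), of I v] by (simp only:) arith
qed

lemma card_Tset_le_sqrt_ratio:
  assumes "prime p" "0 < s" "s \<le> l" "card (Tset p l I v) < p"
  shows "real (card (Tset p s I v)) \<le> 1 + 2 * real (card (Tset p l I v)) * sqrt (s / l)"
proof -
  let ?N = "card (Tset p s I v)" and ?L = "card (Tset p l I v)"
  define q where "q = sqrt (l / s)"
  define r where "r = nat \<lfloor>q\<rfloor>"
  have "1 \<le> q" unfolding q_def using assms(2,3) by simp
  then have "real r = of_int \<lfloor>q\<rfloor>" "1 \<le> \<lfloor>q\<rfloor>" unfolding r_def by simp_all
  then have r: "1 \<le> r" "real r \<le> q" "q \<le> 2 * real r"
    by linarith+
  have "(real r)\<^sup>2 * s \<le> l"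
    using power_mono[OF r(2), of 2] assms(2) \<open>1 \<le> q\<close> unfolding q_def by (simp add: field_simps)
  then have "card (Tset p ((real r)\<^sup>2 * s) I v) \<le> ?L"
    by (intro card_mono finite_Tset Tset_mono)
  with card_Tset_iterate[OF assms(1) _ r(1), of s I v] assms(2,4)
  have "r * (?N - 1) \<le> ?L"
    by linarith
  then have "real (r * (?N - 1)) \<le> real ?L"
    by (simp only: of_nat_le_iff)
  moreover have "0 < ?N"
    using card_Tset_pos assms(1,2) prime_gt_0_nat by fastforce
  ultimately have "real r * (real ?N - 1) \<le> real ?L"
    by (simp add: of_nat_diff)
  moreover have "q / 2 * (real ?N - 1) \<le> real r * (real ?N - 1)"
    using r(3) \<open>0 < ?N\<close> by (intro mult_right_mono) auto
  ultimately have "real ?N - 1 \<le> 2 * real ?L / q"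
    using \<open>1 \<le> q\<close> by (simp add: field_simps)
  moreover have "sqrt (s / l) = 1 / q"
    unfolding q_def by (simp add: real_sqrt_divide)
  ultimately show ?thesis by simp
qed

lemma sum_dnear_sq_ge:
  assumes "p > 0" "\<not> int p dvd w"
  shows "real p / 32 \<le> (\<Sum>k\<in>{0..<int p}. (dnear (real_of_int (k * w) / real p))\<^sup>2)"
proof -
  have "(\<Sum>k\<in>{0..<int p}. cos (2 * pi * real_of_int k * real_of_int w / real p)) = 0"
    using arg_cong[OF sum_cis_roots_of_unity[OF assms(1), of w], of Re] assms(2) by (simp add: Re_sum)
  then have "real p = (\<Sum>k\<in>{0..<int p}. 1 - cos (2 * pi * (real_of_int (k * w) / real p)))"
    using assms(1) by (simp add: sum_subtractf mult.assoc)
  also have "\<dots> \<le> (\<Sum>k\<in>{0..<int p}. 32 * (dnear (real_of_int (k * w) / real p))\<^sup>2)"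
    by (intro sum_mono one_minus_cos_le_dnear)
  also have "\<dots> = 32 * (\<Sum>k\<in>{0..<int p}. (dnear (real_of_int (k * w) / real p))\<^sup>2)"
    by (simp add: sum_distrib_left)
  finally show ?thesis by simp
qed

lemma sum_tnorm_ge:
  assumes "p > 0" "finite I"
  shows "real (supp_size p I v) * real p / 32 \<le> (\<Sum>k\<in>{0..<int p}. tnorm p I v k)"
proof -
  let ?S = "{i \<in> I. v i mod int p \<noteq> 0}"
  let ?f = "\<lambda>i. \<Sum>k\<in>{0..<int p}. (dnear (real_of_int (k * (v i mod int p)) / real p))\<^sup>2"
  have "real (supp_size p I v) * real p / 32 = (\<Sum>i\<in>?S. real p / 32)"
    unfolding supp_size_def by simp
  also have "\<dots> \<le> (\<Sum>i\<in>?S. ?f i)"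
    using assms(1) by (intro sum_mono sum_dnear_sq_ge) (auto simp: dvd_eq_mod_eq_0)
  also have "\<dots> \<le> (\<Sum>i\<in>I. ?f i)"
    using assms(2) by (intro sum_mono2) (auto intro: sum_nonneg)
  also have "\<dots> = (\<Sum>k\<in>{0..<int p}. tnorm p I v k)"
    unfolding tnorm_def by (rule sum.swap)
  finally show ?thesis .
qed

lemma card_Tset_less:
  assumes "p > 0" "finite I" "t < real (supp_size p I v) / 32"
  shows "card (Tset p t I v) < p"
proof (rule ccontr)
  assume "\<not> card (Tset p t I v) < p"
  then have "Tset p t I v = {0..<int p}"
    using card_mono[OF _ Tset_subset, of p t I v] by (intro card_subset_eq Tset_subset) auto
  then have "tnorm p I v k \<le> t" if "k \<in> {0..<int p}" for k
    using that unfolding Tset_eq_tnorm_le by (metis (no_types, lifting) mem_Collect_eq)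
  then have "(\<Sum>k\<in>{0..<int p}. tnorm p I v k) \<le> (\<Sum>k\<in>{0..<int p}. t)"
    by (rule sum_mono)
  then have "real (supp_size p I v) * real p / 32 \<le> real p * t"
    using sum_tnorm_ge[OF assms(1,2), of v] by simp
  then show False using assms(1,3) by (simp add: field_simps)
qed

section \<open>Summation over layers\<close>

lemma exp_neg_two_mult_le: "exp (- 2 * real j) \<le> (1/4) ^ j"
proof -
  have "2 * 2 \<le> exp (1::real) * exp 1"
    using exp_ge_add_one_self[of 1] by (intro mult_mono) auto
  then have "exp (- 2 :: real) \<le> 1/4"
    by (simp add: exp_add[symmetric] exp_minus field_simps)
  then have "exp (- 2 :: real) ^ j \<le> (1/4) ^ j"
    by (intro power_mono) auto
  then show ?thesis
    by (simp add: exp_of_nat_mult[symmetric] mult.commute)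
qed

lemma sum_quarter_pow_affine_le:
  fixes a b :: real
  assumes "0 \<le> a" "0 \<le> b"
  shows "(\<Sum>j<J. (1/4) ^ j * (a + b * (real j + 1))) \<le> 2 * (a + b)"
proof -
  have "(1/4) ^ j * (a + b * (real j + 1)) \<le> (a + b) * (1/2) ^ j" for j
  proof -
    have "real j + 1 \<le> 2 ^ j"
      by (induction j) auto
    then have "b * (real j + 1) \<le> b * 2 ^ j"
      using assms(2) by (rule mult_left_mono)
    moreover have "a * 1 \<le> a * 2 ^ j"
      using assms(1) by (intro mult_left_mono) simp_all
    ultimately have "(1/4) ^ j * (a + b * (real j + 1)) \<le> (1/4) ^ j * ((a + b) * 2 ^ j)"
      by (intro mult_left_mono) (simp_all add: distrib_right)
    also have "\<dots> = (a + b) * ((1/4) * 2) ^ j"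
      by (simp only: power_mult_distrib mult_ac)
    finally show ?thesis by simp
  qed
  then have "(\<Sum>j<J. (1/4) ^ j * (a + b * (real j + 1))) \<le> (a + b) * (\<Sum>j<J. (1/2) ^ j)"
    by (simp add: sum_distrib_left sum_mono)
  also have "\<dots> \<le> (a + b) * 2"
    using assms by (intro mult_left_mono) (auto simp: sum_gp_strict)
  finally show ?thesis by simp
qed

lemma exp_le_sum_layers:
  assumes "0 \<le> g" "g \<le> l"
  shows "exp (- 2 * g) \<le> (\<Sum>j<nat \<lceil>l\<rceil> + 1. if g \<le> real j + 1 then (1/4) ^ j else 0)"
proof -
  define j where "j = nat \<lfloor>g\<rfloor>"
  have "real j \<le> g" "g \<le> real j + 1" "j < nat \<lceil>l\<rceil> + 1"
    unfolding j_def using assms by linarith+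
  then have "exp (- 2 * g) \<le> exp (- 2 * real j)"
    by simp
  also have "\<dots> \<le> (if g \<le> real j + 1 then (1/4) ^ j else 0)"
    using exp_neg_two_mult_le[of j] \<open>g \<le> real j + 1\<close> by simp
  also have "\<dots> \<le> (\<Sum>j<nat \<lceil>l\<rceil> + 1. if g \<le> real j + 1 then (1/4) ^ j else 0)"
    using \<open>j < nat \<lceil>l\<rceil> + 1\<close> by (intro member_le_sum) auto
  finally show ?thesis .
qed

lemma card_Tset_min_le:
  assumes "prime p" "0 < l" "card (Tset p l I v) < p" "1 \<le> t"
  shows "real (card (Tset p (min t l) I v)) \<le> 1 + 2 * real (card (Tset p l I v)) / sqrt l * t"
proof -
  have "sqrt (min t l / l) \<le> sqrt (t / l)"
    using assms(2) by (intro real_sqrt_le_mono divide_right_mono) auto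
  also have "\<dots> = sqrt t / sqrt l"
    by (simp add: real_sqrt_divide)
  also have "\<dots> \<le> t / sqrt l"
  proof -
    have "t * 1 \<le> t * t" using assms(4) by (intro mult_left_mono) auto
    then have "sqrt t \<le> t" using assms(4) by (intro real_le_lsqrt) (auto simp: power2_eq_square)
    then show ?thesis using assms(2) by (intro divide_right_mono) auto
  qed
  finally have "2 * real (card (Tset p l I v)) * sqrt (min t l / l) \<le> 2 * real (card (Tset p l I v)) * (t / sqrt l)"
    by (intro mult_left_mono) auto
  moreover have "real (card (Tset p (min t l) I v)) \<le> 1 + 2 * real (card (Tset p l I v)) * sqrt (min t l / l)"
    using assms(1-4) by (intro card_Tset_le_sqrt_ratio) auto
  ultimately show ?thesis by simp
qed

lemma sum_exp_tnorm_Tset_le: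
  assumes "prime p" "0 < l" "card (Tset p l I v) < p"
  shows "(\<Sum>k\<in>Tset p l I v. exp (- 2 * tnorm p I v k)) \<le> 2 + 4 * real (card (Tset p l I v)) / sqrt l"
proof -
  define T where "T = Tset p l I v"
  define c where "c = 2 * real (card T) / sqrt l"
  define J where "J = nat \<lceil>l\<rceil> + 1"
  have "(\<Sum>k\<in>T. exp (- 2 * tnorm p I v k))
        \<le> (\<Sum>k\<in>T. \<Sum>j<J. if tnorm p I v k \<le> real j + 1 then (1/4) ^ j else 0)"
    unfolding T_def J_def Tset_eq_tnorm_le by (intro sum_mono exp_le_sum_layers tnorm_nonneg) auto
  also have "\<dots> = (\<Sum>j<J. (1/4) ^ j * real (card {k \<in> T. tnorm p I v k \<le> real j + 1}))"
    unfolding T_def by (subst sum.swap) (simp add: sum.If_cases finite_Tset Int_def conj_commute mult.commute)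
  also have "\<dots> \<le> (\<Sum>j<J. (1/4) ^ j * (1 + c * (real j + 1)))"
  proof (intro sum_mono mult_left_mono)
    fix j
    have "{k \<in> T. tnorm p I v k \<le> real j + 1} = Tset p (min (real j + 1) l) I v"
      unfolding T_def Tset_eq_tnorm_le by auto
    then show "real (card {k \<in> T. tnorm p I v k \<le> real j + 1}) \<le> 1 + c * (real j + 1)"
      unfolding c_def T_def using card_Tset_min_le[OF assms] by simp
  qed simp
  also have "\<dots> \<le> 2 * (1 + c)"
    unfolding c_def using assms(2) by (intro sum_quarter_pow_affine_le) auto
  finally show ?thesis unfolding c_def T_def by simp
qed

lemma sum_exp_tnorm_outside_Tset_le:
  "(\<Sum>k\<in>{0..<int p} - Tset p l I v. exp (- 2 * tnorm p I v k)) \<le> real p * exp (- 2 * l)"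
proof -
  have "(\<Sum>k\<in>{0..<int p} - Tset p l I v. exp (- 2 * tnorm p I v k))
        \<le> real (card ({0..<int p} - Tset p l I v)) * exp (- 2 * l)"
    by (intro sum_bounded_above) (auto simp: Tset_eq_tnorm_le)
  also have "\<dots> \<le> real p * exp (- 2 * l)"
    using card_mono[of "{0..<int p}" "{0..<int p} - Tset p l I v"] by (intro mult_right_mono) auto
  finally show ?thesis .
qed

lemma mult_exp_neg_le_one:
  fixes x y :: real
  assumes "0 < x" "ln x \<le> y"
  shows "x * exp (- y) \<le> 1"
proof -
  have "x * exp (- y) \<le> x * exp (- ln x)"
    using assms by (intro mult_left_mono) auto
  also have "\<dots> = 1"
    using assms(1) by (simp add: exp_minus)
  finally show ?thesis .
qed

lemma rho_le_card_Tset: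
  assumes "prime p" "odd p" "finite I" "0 < l" "card (Tset p l I v) < p"
    and "ln (real p) \<le> 2 * l"
  shows "rho p I v \<le> (3 + 4 * real (card (Tset p l I v)) / sqrt l) / real p"
proof -
  have "p > 0" using assms(1) prime_gt_0_nat by blast
  then have "real p * exp (- 2 * l) \<le> 1"
    using mult_exp_neg_le_one[of "real p" "2 * l"] assms(6) by simp
  have "(\<Sum>k\<in>{0..<int p}. exp (- 2 * tnorm p I v k))
        = (\<Sum>k\<in>{0..<int p} - Tset p l I v. exp (- 2 * tnorm p I v k))
          + (\<Sum>k\<in>Tset p l I v. exp (- 2 * tnorm p I v k))"
    by (intro sum.subset_diff Tset_subset) simp
  also have "\<dots> \<le> 3 + 4 * real (card (Tset p l I v)) / sqrt l"
    using sum_exp_tnorm_outside_Tset_le[where p = p and l = l and I = I and v = v]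
      sum_exp_tnorm_Tset_le[OF assms(1,4,5)] \<open>real p * exp (- 2 * l) \<le> 1\<close>
    by linarith
  finally show ?thesis
    using rho_le_sum_exp_tnorm[OF \<open>p > 0\<close> assms(2,3), of v] \<open>p > 0\<close>
    by (smt (verit) divide_right_mono of_nat_0_le_iff)
qed

theorem lemma3p3:
  fixes p n :: nat and v :: "nat \<Rightarrow> int" and Y :: "nat set"
  assumes "prime p"
    and "rho p {1..n} v \<ge> 4 / real p"
    and "real (supp_size p {1..n} v) \<ge> 2 ^ 18 * ln (real p)"
    and "Y \<subseteq> {1..n}"
    and "real (supp_size p Y v) \<ge> real (supp_size p {1..n} v) / 4"
  shows "rho p Y v \<le> 2 ^ 13 * real (card (Tset p (real (supp_size p {1..n} v) / 2 ^ 16) Y v))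
                      / (real p * sqrt (real (supp_size p {1..n} v)))"
proof -
  define m where "m = real (supp_size p {1..n} v)"
  define l where "l = m / 2 ^ 16"
  let ?NF = "card (Tset p l {1..n} v)" and ?NY = "card (Tset p l Y v)"
  have "p > 0" "finite Y"
    using assms(1,4) prime_gt_0_nat finite_subset by auto
  have "4 / real p \<le> 1"
    using assms(2) rho_le_one[OF \<open>p > 0\<close>, of "{1..n}" v] by simp
  then have "odd p" "0 < ln (real p)"
    using assms(1) \<open>p > 0\<close> prime_odd_nat by (auto simp: field_simps)
  then have "0 < m" and tail: "ln (real p) \<le> 2 * l"
    using assms(3) unfolding m_def l_def by (auto intro: order_less_le_trans)
  then have "0 < l" by (simp add: l_def)
  have "?NY < p"
    using assms(5) \<open>0 < l\<close> by (intro card_Tset_less[OF \<open>p > 0\<close> \<open>finite Y\<close>]) (simp add: l_def m_def)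
  have "?NF \<le> ?NY"
    using assms(4) by (intro card_mono finite_Tset Tset_antimono_index) auto
  then have "4 / real p \<le> (3 + 4 * real ?NF / sqrt l) / real p"
    using assms(2) rho_le_card_Tset[OF assms(1) \<open>odd p\<close> _ \<open>0 < l\<close> _ tail] \<open>?NY < p\<close>
    by (meson finite_atLeastAtMost order_trans le_less_trans)
  then have "1 \<le> 4 * real ?NY / sqrt l"
    using \<open>?NF \<le> ?NY\<close> \<open>p > 0\<close> \<open>0 < l\<close> by (simp add: divide_right_mono field_simps)
  have "rho p Y v \<le> (3 + 4 * real ?NY / sqrt l) / real p"
    by (rule rho_le_card_Tset[OF assms(1) \<open>odd p\<close> \<open>finite Y\<close> \<open>0 < l\<close> \<open>?NY < p\<close> tail])
  also have "\<dots> \<le> 2 ^ 12 * real ?NY / (real p * sqrt m)"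
    using \<open>1 \<le> 4 * real ?NY / sqrt l\<close> \<open>p > 0\<close> unfolding l_def by (simp add: real_sqrt_divide field_simps)
  also have "\<dots> \<le> 2 ^ 13 * real ?NY / (real p * sqrt m)"
    unfolding m_def by (intro divide_right_mono) auto
  finally show ?thesis unfolding l_def m_def .
qed

end
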